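(* Consider the online active learning problem and the OLA algorithm described in the context, run over a horizon of length $T$ with any positive integer parameter $m$. Then the expected regret of OLA satisfies $$\mathbb E[R(T)]\le \tfrac12 .$$
   Context: Setting. $\mathcal X$ is an instance space and $\mathcal Y=\{0,1\}$. Instances $X_1,X_2,\dots$ are drawn i.i.d. from an unknown distribution $\mathbb P_X$ on $\mathcal X$. Each $X_t$ has a hidden label $Y_t$, with $(X_t,Y_t)$ i.i.d. from an unknown joint distribution $\mathbb P=\mathbb P_X\times\mathbb P_{Y|X}$. Let $\eta(x)=\mathbb P(Y=1\mid X=x)$ and let $h^*(x)=1$ if $\eta(x)\ge 1/2$ and $h^*(x)=0$ otherwise (the Bayes optimal classifier). $\mathcal H$ is a set of measurable functions $\mathcal X\to\{0,1\}$ of finite VC dimension $d$, and it is assumed that $h^*\in\mathcal H$. For a set $\mathcal H'$ of classifiers, $\mathcal S(\mathcal H',n)$ denotes its $n$-th shattering coefficient. Protocol. At each time $t=1,\dots,T$ the learner sees $X_t$ and decides whether to query ($\upsilon_t=1$) or not ($\upsilon_t=0$). If it queries, $Y_t$ is revealed; otherwise it outputs a predicted label $\lambda_t$ (decisions depend only on past information). The regret is $R(T)=\sum_{t\le T:\upsilon_t=0}\big(\mathbb 1[\lambda_t\neq Y_t]-\mathbb 1[h^*(X_t)\neq Y_t]\big)$ and the label complexity is $Q(T)=\sum_{t=1}^T\mathbb 1[\upsilon_t=1]$. Notation. For $\mathcal H'\subseteq\mathcal H$, $\Psi(\mathcal H')=\{x\in\mathcal X:\exists h_1,h_2\in\mathcal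 H',\,h_1(x)\neq h_2(x)\}$. For a finite set $\mathcal Z$ of labeled examples, $\epsilon_{\mathcal Z}(h)=\frac1{|\mathcal Z|}\sum_{(x,y)\in\mathcal Z}\mathbb 1[h(x)\neq y]$ and $\epsilon_{\mathcal Z}(h_1,h_2)=\frac1{|\mathcal Z|}\sum_{(x,y)\in\mathcal Z}\mathbb 1[h_1(x)\neq y\wedge h_2(x)=y]$. Let $\beta_n=\sqrt{(4/n)\ln\big(16T^2\mathcal S(\mathcal H,2n)^2\big)}$. OLA algorithm (inputs $T,d,m$). Set $M=\lceil m d\log T\rceil$, epoch $k=0$, $\mathcal H_0=\mathcal H$, $\mathcal D_0=\mathcal X$, $\mathcal Z_0=\emptyset$. For $t=1,\dots,T$: if $X_t\notin\mathcal D_k$, do not query and label $X_t$ by $h(X_t)$ for an arbitrary $h\in\mathcal H_k$; if $X_t\in\mathcal D_k$, query $Y_t$ and add $(X_t,Y_t)$ to $\mathcal Z_k$; when $|\mathcal Z_k|=M$, let $h_k^*\in\arg\min_{h\in\mathcal H_k}\epsilon_{\mathcal Z_k}(h)$, set $$\mathcal H_{k+1}=\{h\in\mathcal H_k:\ \epsilon_{\mathcal Z_k}(h)-\epsilon_{\mathcal Z_k}(h_k^* )<\Delta_{\mathcal Z_k}(h,h_k^* )\},\qquad \mathcal D_{k+1}=\Psi(\mathcal H_{k+1}),$$ where $\Delta_{\mathcal Z_k}(h,h_k^* )=\beta_M^2+\beta_M\big(\sqrt{\epsilon_{\mathcal Z_k}(h,h_k^* )}+\sqrt{\epsilon_{\mathcal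 Z_k}(h_k^*,h)}\big)$, set $\mathcal Z_{k+1}=\emptyset$, and increment $k$. *)

theory Defs
  imports "HOL-Probability.Probability"
begin

type_synonym 'x classifier = "'x \<Rightarrow> bool"
type_synonym 'x sample = "('x \<times> bool) list"

text \<open>Labels: True stands for 1, False for 0.\<close>

definition shatters :: "'x classifier set \<Rightarrow> 'x set \<Rightarrow> bool" where
  "shatters H C \<longleftrightarrow> (\<forall>B\<subseteq>C. \<exists>h\<in>H. \<forall>x\<in>C. h x = (x \<in> B))"

definition vc_dim :: "'x set \<Rightarrow> 'x classifier set \<Rightarrow> nat \<Rightarrow> bool" where
  "vc_dim X H d \<longleftrightarrow>
     (\<exists>C. C \<subseteq> X \<and> finite C \<and> card C = d \<and> shatters H C) \<and>
     (\<forall>C. C \<subseteq> X \<and> finite C \<and> shatters H C \<longrightarrow> card C \<le> d)"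

definition shatter_coeff :: "'x set \<Rightarrow> 'x classifier set \<Rightarrow> nat \<Rightarrow> nat" where
  "shatter_coeff X H n =
     Max {card ((\<lambda>h. map h xs) ` H) | xs. length xs = n \<and> set xs \<subseteq> X}"

definition Psi :: "'x classifier set \<Rightarrow> 'x set" where
  "Psi H' = {x. \<exists>h1\<in>H'. \<exists>h2\<in>H'. h1 x \<noteq> h2 x}"

definition emp_err :: "'x sample \<Rightarrow> 'x classifier \<Rightarrow> real" where
  "emp_err Z h = (\<Sum>(x,y)\<leftarrow>Z. of_bool (h x \<noteq> y)) / real (length Z)"

definition emp_err2 :: "'x sample \<Rightarrow> 'x classifier \<Rightarrow> 'x classifier \<Rightarrow> real" where
  "emp_err2 Z h1 h2 = (\<Sum>(x,y)\<leftarrow>Z. of_bool (h1 x \<noteq> y \<and> h2 x = y)) / real (length Z)"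

definition beta :: "'x set \<Rightarrow> 'x classifier set \<Rightarrow> nat \<Rightarrow> nat \<Rightarrow> real" where
  "beta X H T n = sqrt ((4 / real n) * ln (16 * real T ^ 2 * real (shatter_coeff X H (2 * n)) ^ 2))"

definition ola_M :: "nat \<Rightarrow> nat \<Rightarrow> nat \<Rightarrow> nat" where
  "ola_M m d T = nat \<lceil>real m * real d * ln (real T)\<rceil>"

text \<open>Version-space update at the end of an epoch; amin is the argmin choice.\<close>
definition ola_update ::
  "real \<Rightarrow> ('x classifier set \<Rightarrow> 'x sample \<Rightarrow> 'x classifier)
   \<Rightarrow> 'x classifier set \<Rightarrow> 'x sample \<Rightarrow> 'x classifier set" where
  "ola_update b amin Hk Z =
     (let hs = amin Hk Z in
      {h \<in> Hk. emp_err Z h - emp_err Z hs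
               < b\<^sup>2 + b * (sqrt (emp_err2 Z h hs) + sqrt (emp_err2 Z hs h))})"

definition ola_step ::
  "nat \<Rightarrow> real \<Rightarrow> ('x classifier set \<Rightarrow> 'x sample \<Rightarrow> 'x classifier)
   \<Rightarrow> 'x classifier set \<times> 'x set \<times> 'x sample \<Rightarrow> 'x \<times> bool
   \<Rightarrow> 'x classifier set \<times> 'x set \<times> 'x sample" where
  "ola_step M b amin st e =
     (case st of (Hk, Dk, Z) \<Rightarrow>
       if fst e \<in> Dk then
         (let Z' = Z @ [e] in
          if length Z' = M then
            (let H' = ola_update b amin Hk Z' in (H', Psi H', []))
          else (Hk, Dk, Z'))
       else (Hk, Dk, Z))"

text \<open>State before round t+1, i.e. after processing omega 0, ..., omega (t-1).
  Initially H_0 = H, D_0 = whole instance space, Z_0 empty.\<close>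
fun ola_state ::
  "'x classifier set \<Rightarrow> nat \<Rightarrow> real \<Rightarrow> ('x classifier set \<Rightarrow> 'x sample \<Rightarrow> 'x classifier)
   \<Rightarrow> (nat \<Rightarrow> 'x \<times> bool) \<Rightarrow> nat \<Rightarrow> 'x classifier set \<times> 'x set \<times> 'x sample" where
  "ola_state H M b amin \<omega> 0 = (H, UNIV, [])"
| "ola_state H M b amin \<omega> (Suc t) = ola_step M b amin (ola_state H M b amin \<omega> t) (\<omega> t)"

text \<open>Regret over T rounds (round t+1 uses example omega t); sel is the labelling
  choice (a prediction of some classifier of the current version space), hs the
  Bayes classifier.\<close>
definition ola_regret ::
  "'x classifier set \<Rightarrow> nat \<Rightarrow> real \<Rightarrow> ('x classifier set \<Rightarrow> 'x sample \<Rightarrow> 'x classifier)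
   \<Rightarrow> ('x classifier set \<Rightarrow> 'x \<Rightarrow> bool) \<Rightarrow> 'x classifier \<Rightarrow> nat
   \<Rightarrow> (nat \<Rightarrow> 'x \<times> bool) \<Rightarrow> real" where
  "ola_regret H M b amin sel hs T \<omega> =
     (\<Sum>t<T. case ola_state H M b amin \<omega> t of (Hk, Dk, Z) \<Rightarrow>
        (if fst (\<omega> t) \<in> Dk then 0
         else of_bool (sel Hk (fst (\<omega> t)) \<noteq> snd (\<omega> t))
              - of_bool (hs (fst (\<omega> t)) \<noteq> snd (\<omega> t))))"

end

theory Submission
  imports Defs
begin

text \<open>As long as the Bayes classifier \<open>h*\<close> survives in the version space, every instance that
  is not queried lies outside the disagreement region of the version space, so it is labelled as
  \<open>h*\<close> labels it and costs no regret; hence the regret is at most \<open>T\<close> times the indicator that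
  \<open>h*\<close> gets eliminated. Given the instances, the labels are independent Bernoulli variables whose
  more likely value is the one predicted by \<open>h*\<close>, so by Hoeffding's inequality a fixed competitor
  beats \<open>h*\<close> by the elimination margin on a fixed sample of \<open>M\<close> queried points with probability
  at most \<open>exp (- M \<beta>\<^sup>2 / 2)\<close>. A union bound over the at most \<open>S(H, 2M)\<close> labellings of the sample,
  the round completing the epoch and the round starting it bounds the elimination probability by
  \<open>T\<^sup>2 S exp (- M \<beta>\<^sup>2 / 2)\<close>, and the choice of \<open>\<beta>\<close> makes \<open>T\<^sup>3 S exp (- M \<beta>\<^sup>2 / 2) \<le> 1/2\<close>.\<close>

section \<open>Runs of OLA\<close>

lemma ola_step_simp:
  "ola_step M b amin (Hk, Dk, Z) e =
    (if fst e \<in> Dk then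
       (if length (Z @ [e]) = M then
          (ola_update b amin Hk (Z @ [e]), Psi (ola_update b amin Hk (Z @ [e])), [])
        else (Hk, Dk, Z @ [e]))
     else (Hk, Dk, Z))"
  by (simp add: ola_step_def Let_def)

lemma ola_update_subset: "ola_update b amin Hk Z \<subseteq> Hk"
  by (auto simp: ola_update_def Let_def)

lemma ola_state_antimono:
  assumes "t \<le> t'"
  shows "fst (ola_state H M b amin \<omega> t') \<subseteq> fst (ola_state H M b amin \<omega> t)"
  using assms
proof (induction t' rule: dec_induct)
  case (step n)
  have "fst (ola_state H M b amin \<omega> (Suc n)) \<subseteq> fst (ola_state H M b amin \<omega> n)"
    using ola_update_subset[of b amin]
    by (cases "ola_state H M b amin \<omega> n") (auto simp: ola_step_simp)
  with step.IH show ?case by blast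
qed simp

lemma ola_state_subset: "fst (ola_state H M b amin \<omega> t) \<subseteq> H"
  using ola_state_antimono[of 0 t H M b amin \<omega>] by simp

lemma ola_state_M0: "fst (ola_state H 0 b amin \<omega> t) = H"
proof (induction t)
  case (Suc t)
  then show ?case by (cases "ola_state H 0 b amin \<omega> t") (simp add: ola_step_simp)
qed simp

lemma ola_state_region:
  "ola_state H M b amin \<omega> t = (Hk, Dk, Z) \<Longrightarrow> Dk = UNIV \<or> Dk = Psi Hk"
proof (induction t arbitrary: Hk Dk Z)
  case (Suc t)
  then show ?case
    by (cases "ola_state H M b amin \<omega> t") (auto simp: ola_step_simp split: if_splits)
qed simp

lemma ola_state_epoch:
  "ola_state H M b amin \<omega> t = (Hk, Dk, Z) \<Longrightarrow>
   \<exists>s\<le>t. ola_state H M b amin \<omega> s = (Hk, Dk, []) \<and>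
         Z = map \<omega> (filter (\<lambda>i. fst (\<omega> i) \<in> Dk) [s..<t])"
proof (induction t arbitrary: Hk Dk Z)
  case (Suc t)
  obtain Hk' Dk' Z' where st: "ola_state H M b amin \<omega> t = (Hk', Dk', Z')"
    by (cases "ola_state H M b amin \<omega> t")
  with Suc.IH obtain s where "s \<le> t" "ola_state H M b amin \<omega> s = (Hk', Dk', [])"
    "Z' = map \<omega> (filter (\<lambda>i. fst (\<omega> i) \<in> Dk') [s..<t])"
    by blast
  with Suc.prems st show ?case
    by (cases "fst (\<omega> t) \<in> Dk'"; cases "length (Z' @ [\<omega> t]) = M")
       (auto simp: ola_step_simp intro: exI[of _ "Suc t"] exI[of _ s] le_SucI)
qed simp

lemma ola_state_cong:
  "(\<And>i. i < t \<Longrightarrow> \<omega> i = \<omega>' i) \<Longrightarrow> ola_state H M b amin \<omega> t = ola_state H M b amin \<omega>' t"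
  by (induction t) auto

lemma ola_regret_cong:
  "(\<And>i. i < T \<Longrightarrow> \<omega> i = \<omega>' i) \<Longrightarrow>
   ola_regret H M b amin sel hs T \<omega> = ola_regret H M b amin sel hs T \<omega>'"
  unfolding ola_regret_def
proof (rule sum.cong[OF refl], goal_cases)
  case (1 t)
  then have "\<omega> t = \<omega>' t" "ola_state H M b amin \<omega> t = ola_state H M b amin \<omega>' t"
    by (auto intro: ola_state_cong)
  then show ?case by (simp only:)
qed

lemma abs_ola_regret_le: "\<bar>ola_regret H M b amin sel hs T \<omega>\<bar> \<le> real T"
proof -
  have "\<bar>ola_regret H M b amin sel hs T \<omega>\<bar> \<le> (\<Sum>t<T. (1::real))"
    unfolding ola_regret_def
    by (rule order_trans[OF sum_abs sum_mono]) (auto split: prod.splits)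
  then show ?thesis by simp
qed

lemma ola_regret_le_eliminated:
  assumes sel_ok: "\<forall>A x. A \<noteq> {} \<longrightarrow> (\<exists>h\<in>A. sel A x = h x)"
  shows "ola_regret H M b amin sel hs T \<omega> \<le> real T * of_bool (hs \<notin> fst (ola_state H M b amin \<omega> T))"
proof -
  have "ola_regret H M b amin sel hs T \<omega> \<le> (\<Sum>t<T. of_bool (hs \<notin> fst (ola_state H M b amin \<omega> T)))"
    unfolding ola_regret_def
  proof (rule sum_mono, goal_cases)
    case (1 t)
    obtain Hk Dk Z where st: "ola_state H M b amin \<omega> t = (Hk, Dk, Z)"
      by (cases "ola_state H M b amin \<omega> t")
    have "fst (ola_state H M b amin \<omega> T) \<subseteq> Hk"
      using ola_state_antimono[of t T H M b amin \<omega>] 1 st by simp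
    moreover have "sel Hk (fst (\<omega> t)) = hs (fst (\<omega> t))"
      if "hs \<in> Hk" and "fst (\<omega> t) \<notin> Dk"
    proof -
      from sel_ok \<open>hs \<in> Hk\<close> obtain h where "h \<in> Hk" "sel Hk (fst (\<omega> t)) = h (fst (\<omega> t))"
        by blast
      moreover have "fst (\<omega> t) \<notin> Psi Hk"
        using ola_state_region[OF st] that by auto
      ultimately show ?thesis using \<open>hs \<in> Hk\<close> by (auto simp: Psi_def)
    qed
    ultimately show ?case using st by auto
  qed
  then show ?thesis by simp
qed

section \<open>Elimination of the Bayes classifier\<close>

definition eliminates :: "real \<Rightarrow> 'x sample \<Rightarrow> 'x classifier \<Rightarrow> 'x classifier \<Rightarrow> bool" where
  "eliminates b Z h hs \<longleftrightarrow>
     b\<^sup>2 + b * (sqrt (emp_err2 Z hs h) + sqrt (emp_err2 Z h hs)) \<le> emp_err Z hs - emp_err Z h"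

definition eliminating_epoch ::
  "'x classifier set \<Rightarrow> nat \<Rightarrow> real \<Rightarrow> 'x classifier \<Rightarrow> nat \<Rightarrow> nat \<Rightarrow> 'x set
   \<Rightarrow> (nat \<Rightarrow> 'x \<times> bool) \<Rightarrow> bool" where
  "eliminating_epoch H M b hs T s Dk \<omega> \<longleftrightarrow> (\<exists>t. s \<le> t \<and> t < T \<and>
      length (filter (\<lambda>i. fst (\<omega> i) \<in> Dk) [s..<Suc t]) = M \<and>
      (\<exists>h\<in>H. eliminates b (map \<omega> (filter (\<lambda>i. fst (\<omega> i) \<in> Dk) [s..<Suc t])) h hs))"

lemma eliminated_imp_eliminating_epoch:
  assumes amin_mem: "\<forall>A Z. A \<noteq> {} \<longrightarrow> amin A Z \<in> A"
    and "hs \<in> H" and "hs \<notin> fst (ola_state H M b amin \<omega> T)"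
  shows "0 < M \<and> (\<exists>s<T. eliminating_epoch H M b hs T s (fst (snd (ola_state H M b amin \<omega> s))) \<omega>)"
proof -
  have "hs \<in> fst (ola_state H M b amin \<omega> 0)"
    using assms(2) by simp
  then obtain t where "t < T" and "hs \<in> fst (ola_state H M b amin \<omega> t)"
    and "hs \<notin> fst (ola_state H M b amin \<omega> (Suc t))"
    using ex_least_nat_less[of "\<lambda>t. hs \<notin> fst (ola_state H M b amin \<omega> t)" T] assms(3)
    by blast
  obtain Hk Dk Z where st: "ola_state H M b amin \<omega> t = (Hk, Dk, Z)"
    by (cases "ola_state H M b amin \<omega> t")
  obtain s where "s \<le> t" and st_s: "ola_state H M b amin \<omega> s = (Hk, Dk, [])"
    and Z: "Z = map \<omega> (filter (\<lambda>i. fst (\<omega> i) \<in> Dk) [s..<t])"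
    using ola_state_epoch[OF st] by blast
  have "hs \<in> Hk" and "hs \<notin> fst (ola_step M b amin (Hk, Dk, Z) (\<omega> t))"
    using st \<open>hs \<in> fst (ola_state H M b amin \<omega> t)\<close> \<open>hs \<notin> fst (ola_state H M b amin \<omega> (Suc t))\<close>
    by simp_all
  then have "fst (\<omega> t) \<in> Dk" and len: "length (Z @ [\<omega> t]) = M"
    and "hs \<notin> ola_update b amin Hk (Z @ [\<omega> t])"
    unfolding ola_step_simp by (simp_all split: if_splits)
  define h where "h = amin Hk (Z @ [\<omega> t])"
  have "Hk \<subseteq> H"
    using ola_state_subset[of H M b amin \<omega> t] st by simp
  moreover have "h \<in> Hk"
    using amin_mem \<open>hs \<in> Hk\<close> unfolding h_def by blast
  moreover have "eliminates b (Z @ [\<omega> t]) h hs"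
    using \<open>hs \<notin> ola_update b amin Hk (Z @ [\<omega> t])\<close> \<open>hs \<in> Hk\<close>
    unfolding eliminates_def ola_update_def Let_def h_def by (simp add: not_less)
  moreover have "Z @ [\<omega> t] = map \<omega> (filter (\<lambda>i. fst (\<omega> i) \<in> Dk) [s..<Suc t])"
    using Z \<open>s \<le> t\<close> \<open>fst (\<omega> t) \<in> Dk\<close> by simp
  ultimately have "eliminating_epoch H M b hs T s Dk \<omega>"
    unfolding eliminating_epoch_def using \<open>s \<le> t\<close> \<open>t < T\<close> len
    by (intro exI[of _ t] conjI bexI[of _ h]) (auto simp only: length_map)
  moreover have "0 < M" "s < T"
    using len \<open>s \<le> t\<close> \<open>t < T\<close> by auto
  ultimately show ?thesis
    using st_s by auto
qed

lemma eliminating_epoch_cong: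
  assumes "\<And>i. s \<le> i \<Longrightarrow> \<omega> i = \<omega>' i"
  shows "eliminating_epoch H M b hs T s Dk \<omega> = eliminating_epoch H M b hs T s Dk \<omega>'"
proof -
  have "filter (\<lambda>i. fst (\<omega> i) \<in> Dk) [s..<Suc t] = filter (\<lambda>i. fst (\<omega>' i) \<in> Dk) [s..<Suc t]"
    and "map \<omega> (filter (\<lambda>i. fst (\<omega>' i) \<in> Dk) [s..<Suc t])
         = map \<omega>' (filter (\<lambda>i. fst (\<omega>' i) \<in> Dk) [s..<Suc t])" for t
    using assms by (auto intro!: filter_cong map_cong)
  then show ?thesis unfolding eliminating_epoch_def by presburger
qed

lemma emp_err_diff: "emp_err Z h1 - emp_err Z h2 = emp_err2 Z h1 h2 - emp_err2 Z h2 h1"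
proof -
  have "(\<Sum>(x,y)\<leftarrow>Z. of_bool (h1 x \<noteq> y)) - (\<Sum>(x,y)\<leftarrow>Z. of_bool (h2 x \<noteq> y)) =
        (\<Sum>(x,y)\<leftarrow>Z. of_bool (h1 x \<noteq> y \<and> h2 x = y)) - (\<Sum>(x,y)\<leftarrow>Z. (of_bool (h2 x \<noteq> y \<and> h1 x = y)::real))"
  proof (induction Z)
    case (Cons e Z)
    then show ?case by (cases e) auto
  qed simp
  then show ?thesis unfolding emp_err_def emp_err2_def by (simp add: diff_divide_distrib[symmetric])
qed

lemma emp_err2_map_distinct:
  "distinct J \<Longrightarrow> emp_err2 (map (\<lambda>i. (x i, g i)) J) h1 h2 =
     card {i \<in> set J. h1 (x i) \<noteq> g i \<and> h2 (x i) = g i} / length J"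
  by (simp add: emp_err2_def sum_list_distinct_conv_sum_set o_def Int_def)

lemma eliminates_cong:
  assumes "\<forall>i\<in>set J. h (x i) = h' (x i)"
  shows "eliminates b (map (\<lambda>i. (x i, g i)) J) h hs = eliminates b (map (\<lambda>i. (x i, g i)) J) h' hs"
proof -
  let ?Z = "map (\<lambda>i. (x i, g i)) J"
  have "emp_err ?Z h = emp_err ?Z h'" "emp_err2 ?Z hs h = emp_err2 ?Z hs h'"
    "emp_err2 ?Z h hs = emp_err2 ?Z h' hs"
    unfolding emp_err_def emp_err2_def using assms by (simp_all add: o_def cong: map_cong)
  then show ?thesis unfolding eliminates_def by simp
qed

text \<open>Only the points where \<open>h\<close> and \<open>hs\<close> disagree count, and \<open>sqrt a + sqrt b \<ge> sqrt (a + b)\<close>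
  turns the data-dependent margin into one depending only on their number.\<close>
lemma eliminates_imp_margin:
  assumes "distinct J" and "0 < length J" and "0 \<le> b"
    and "eliminates b (map (\<lambda>i. (x i, g i)) J) h hs"
  defines "Jd \<equiv> {i \<in> set J. h (x i) \<noteq> hs (x i)}"
  shows "real (length J) * b\<^sup>2 + b * sqrt (real (length J) * card Jd)
           \<le> (\<Sum>i\<in>Jd. if g i = hs (x i) then -1 else 1)"
proof -
  define M where "M = real (length J)"
  define Dis where "Dis = {i \<in> Jd. g i \<noteq> hs (x i)}"
  define Agr where "Agr = {i \<in> Jd. g i = hs (x i)}"
  define A where "A = card Dis / M"
  define B where "B = card Agr / M"
  have "M > 0" using assms(2) by (simp add: M_def)
  have "{i \<in> set J. hs (x i) \<noteq> g i \<and> h (x i) = g i} = Dis"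
    "{i \<in> set J. h (x i) \<noteq> g i \<and> hs (x i) = g i} = Agr"
    by (auto simp: Dis_def Agr_def Jd_def)
  then have "emp_err2 (map (\<lambda>i. (x i, g i)) J) hs h = A" "emp_err2 (map (\<lambda>i. (x i, g i)) J) h hs = B"
    unfolding A_def B_def M_def emp_err2_map_distinct[OF assms(1)] by simp_all
  then have elim: "b\<^sup>2 + b * (sqrt A + sqrt B) \<le> A - B"
    using assms(4) unfolding eliminates_def emp_err_diff by simp
  have fin: "finite Dis" "finite Agr" and part: "Jd = Agr \<union> Dis" "Agr \<inter> Dis = {}"
    by (auto simp: Dis_def Agr_def Jd_def)
  then have "card Jd = card Agr + card Dis" by (simp add: card_Un_disjoint)
  then have card: "card Jd = M * (A + B)"
    using \<open>M > 0\<close> by (simp add: A_def B_def field_simps)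
  have "(\<Sum>i\<in>Jd. if g i = hs (x i) then -1 else 1) = (\<Sum>i\<in>Agr. -1) + (\<Sum>i\<in>Dis. (1::real))"
    unfolding part(1) using fin part(2)
    by (simp add: sum.union_disjoint) (simp add: Agr_def Dis_def)
  also have "\<dots> = M * (A - B)"
    using \<open>M > 0\<close> by (simp add: A_def B_def field_simps)
  finally have signs: "(\<Sum>i\<in>Jd. if g i = hs (x i) then -1 else 1) = M * (A - B)" .
  have "sqrt (M * card Jd) = M * sqrt (A + B)"
    using \<open>M > 0\<close> by (simp add: card real_sqrt_mult)
  also have "\<dots> \<le> M * (sqrt A + sqrt B)"
    using \<open>M > 0\<close> by (intro mult_left_mono sqrt_add_le_add_sqrt) (auto simp: A_def B_def)
  finally have "b * sqrt (M * card Jd) \<le> b * (M * (sqrt A + sqrt B))"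
    using \<open>0 \<le> b\<close> by (rule mult_left_mono)
  moreover have "M * (b\<^sup>2 + b * (sqrt A + sqrt B)) = M * b\<^sup>2 + b * (M * (sqrt A + sqrt B))"
    by (simp only: distrib_left mult.left_commute)
  ultimately have "M * b\<^sup>2 + b * sqrt (M * card Jd) \<le> M * (b\<^sup>2 + b * (sqrt A + sqrt B))"
    by linarith
  also have "\<dots> \<le> M * (A - B)"
    using elim \<open>M > 0\<close> by simp
  finally show ?thesis unfolding signs M_def .
qed

section \<open>Probability of elimination\<close>

lemma prob_Pi_bernoulli_minority_excess_le:
  fixes J A :: "'i set" and p :: "'i \<Rightarrow> real"
  assumes "finite A" "J \<subseteq> A" "J \<noteq> {}" "\<forall>i\<in>J. 0 \<le> p i \<and> p i \<le> 1" "0 \<le> \<epsilon>"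
  shows "measure_pmf.prob (Pi_pmf A False (\<lambda>i. bernoulli_pmf (p i)))
           {g. \<epsilon> \<le> (\<Sum>i\<in>J. if g i = (1/2 \<le> p i) then -1 else 1)} \<le> exp (- \<epsilon>\<^sup>2 / (2 * card J))"
proof -
  define Q where "Q = Pi_pmf A False (\<lambda>i. bernoulli_pmf (p i))"
  define X where "X = (\<lambda>i (g :: 'i \<Rightarrow> bool). if g i = (1/2 \<le> p i) then -1 else (1::real))"
  have "prob_space.indep_vars (measure_pmf Q) (\<lambda>_. count_space UNIV) (\<lambda>i g. g i) J"
    unfolding Q_def
    by (rule prob_space.indep_vars_subset[OF measure_pmf.prob_space_axioms indep_vars_Pi_pmf])
       (use assms in auto)
  then have "prob_space.indep_vars (measure_pmf Q) (\<lambda>_. borel) X J"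
    unfolding X_def by (rule prob_space.indep_vars_compose2[OF measure_pmf.prob_space_axioms]) simp
  then interpret Hoeffding_ineq "measure_pmf Q" J X "\<lambda>_. -1" "\<lambda>_. 1"
      "\<Sum>i\<in>J. measure_pmf.expectation Q (X i)"
    unfolding Hoeffding_ineq_def indep_interval_bounded_random_variables_def
      indep_interval_bounded_random_variables_axioms_def
    using assms by (auto simp: measure_pmf.prob_space_axioms X_def finite_subset)
  have "measure_pmf.expectation Q (X i) \<le> 0" if "i \<in> J" for i
  proof -
    have "0 \<le> p i" "p i \<le> 1" and "i \<in> A"
      using that assms(2,4) by auto
    have "measure_pmf.expectation Q (X i) =
          measure_pmf.expectation (map_pmf (\<lambda>g. g i) Q) (\<lambda>c. if c = (1/2 \<le> p i) then -1 else 1)"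
      by (simp add: X_def)
    also have "map_pmf (\<lambda>g. g i) Q = bernoulli_pmf (p i)"
      unfolding Q_def using \<open>i \<in> A\<close> assms(1) by (simp add: Pi_pmf_component)
    finally show ?thesis
      using \<open>0 \<le> p i\<close> \<open>p i \<le> 1\<close> by (cases "1/2 \<le> p i") simp_all
  qed
  then have "(\<Sum>i\<in>J. measure_pmf.expectation Q (X i)) \<le> 0"
    by (rule sum_nonpos)
  then have "measure_pmf.prob Q {g. \<epsilon> \<le> (\<Sum>i\<in>J. X i g)}
      \<le> measure_pmf.prob Q {g. (\<Sum>i\<in>J. measure_pmf.expectation Q (X i)) + \<epsilon> \<le> (\<Sum>i\<in>J. X i g)}"
    by (intro measure_pmf.finite_measure_mono) auto
  also have "\<dots> \<le> exp (- 2 * \<epsilon>\<^sup>2 / (\<Sum>i\<in>J. (1 - -1)\<^sup>2))"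
    using Hoeffding_ineq_ge[OF \<open>0 \<le> \<epsilon>\<close>] assms by (simp add: card_gt_0_iff finite_subset)
  also have "\<dots> = exp (- \<epsilon>\<^sup>2 / (2 * card J))"
    by simp
  finally show ?thesis unfolding Q_def X_def .
qed

lemma prob_pair_pmf_le:
  assumes "\<And>a. measure_pmf.prob B {b. P a b} \<le> c"
  shows "measure_pmf.prob (pair_pmf A B) {(a, b). P a b} \<le> c"
proof -
  have "0 \<le> c" using assms[of undefined] measure_nonneg order_trans by blast
  have "emeasure (pair_pmf A B) {(a, b). P a b} = (\<integral>\<^sup>+a. \<integral>\<^sup>+b. indicator {(a, b). P a b} (a, b) \<partial>B \<partial>A)"
    by (simp add: nn_integral_pair_pmf' flip: nn_integral_indicator)
  also have "\<dots> = (\<integral>\<^sup>+a. emeasure B {b. P a b} \<partial>A)"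
    by (intro nn_integral_cong) (simp add: indicator_def flip: nn_integral_indicator)
  also have "\<dots> \<le> (\<integral>\<^sup>+a. ennreal c \<partial>A)"
    using assms by (intro nn_integral_mono) (simp add: measure_pmf.emeasure_eq_measure ennreal_leI)
  also have "\<dots> = ennreal c"
    by (simp add: measure_pmf.emeasure_space_1)
  finally show ?thesis using \<open>0 \<le> c\<close> by (simp add: measure_pmf.emeasure_eq_measure)
qed

context
  fixes x :: "nat \<Rightarrow> 'x" and p :: "nat \<Rightarrow> real" and hs :: "'x classifier" and T :: nat
  assumes p_range: "\<forall>t<T. 0 \<le> p t \<and> p t \<le> 1"
    and hs_bayes: "\<forall>t<T. hs (x t) = (1/2 \<le> p t)"
begin

lemma prob_eliminates_le:
  assumes "A \<subseteq> {..<T}" "distinct J" "set J \<subseteq> A" "length J = M" "0 < M" "0 < b"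
  shows "measure_pmf.prob (Pi_pmf A False (\<lambda>t. bernoulli_pmf (p t)))
           {g. eliminates b (map (\<lambda>i. (x i, g i)) J) h hs} \<le> exp (- real M * b\<^sup>2 / 2)"
proof -
  define Jd where "Jd = {i \<in> set J. h (x i) \<noteq> hs (x i)}"
  define S where "S g = (\<Sum>i\<in>Jd. if g i = hs (x i) then -1 else 1 :: real)" for g
  have margin: "real M * b\<^sup>2 + b * sqrt (real M * card Jd) \<le> S g"
    if "eliminates b (map (\<lambda>i. (x i, g i)) J) h hs" for g
    using eliminates_imp_margin[OF assms(2) _ _ that] assms(4-6) unfolding Jd_def S_def by simp
  show ?thesis
  proof (cases "Jd = {}")
    case True
    have "0 < real M * b\<^sup>2" using assms(5,6) by simp
    with True margin have "{g. eliminates b (map (\<lambda>i. (x i, g i)) J) h hs} = {}"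
      by (fastforce simp: S_def)
    then show ?thesis by simp
  next
    case False
    have "finite A" using assms(1) finite_subset by blast
    have "Jd \<subseteq> A" using assms(3) by (auto simp: Jd_def)
    have "S g = (\<Sum>i\<in>Jd. if g i = (1/2 \<le> p i) then -1 else 1)" for g
      unfolding S_def using hs_bayes \<open>Jd \<subseteq> A\<close> assms(1) by (intro sum.cong) auto
    moreover have "b * sqrt (real M * card Jd) \<le> S g"
      if "eliminates b (map (\<lambda>i. (x i, g i)) J) h hs" for g
      using margin[OF that] by (smt (verit) zero_le_mult_iff zero_le_power2 of_nat_0_le_iff)
    ultimately have "measure_pmf.prob (Pi_pmf A False (\<lambda>t. bernoulli_pmf (p t)))
           {g. eliminates b (map (\<lambda>i. (x i, g i)) J) h hs}
         \<le> measure_pmf.prob (Pi_pmf A False (\<lambda>t. bernoulli_pmf (p t)))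
           {g. b * sqrt (real M * card Jd) \<le> (\<Sum>i\<in>Jd. if g i = (1/2 \<le> p i) then -1 else 1)}"
      by (intro measure_pmf.finite_measure_mono) auto
    also have "\<dots> \<le> exp (- (b * sqrt (real M * card Jd))\<^sup>2 / (2 * card Jd))"
      using \<open>finite A\<close> \<open>Jd \<subseteq> A\<close> False p_range assms(1,6)
      by (intro prob_Pi_bernoulli_minority_excess_le) auto
    also have "\<dots> = exp (- real M * b\<^sup>2 / 2)"
      using False \<open>Jd \<subseteq> A\<close> \<open>finite A\<close> by (simp add: power_mult_distrib finite_subset card_gt_0_iff)
    finally show ?thesis .
  qed
qed

text \<open>Whether \<open>h\<close> eliminates \<open>hs\<close> depends only on the labelling \<open>h\<close> induces on the sample, so
  one representative per labelling suffices in the union bound.\<close>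
lemma prob_eliminated_by_some_le:
  assumes "A \<subseteq> {..<T}" "distinct J" "set J \<subseteq> A" "length J = M" "0 < M" "0 < b"
    and "card ((\<lambda>h. map h (map x J)) ` H) \<le> S"
  shows "measure_pmf.prob (Pi_pmf A False (\<lambda>t. bernoulli_pmf (p t)))
           {g. \<exists>h\<in>H. eliminates b (map (\<lambda>i. (x i, g i)) J) h hs} \<le> real S * exp (- real M * b\<^sup>2 / 2)"
proof -
  define Q where "Q = Pi_pmf A False (\<lambda>t. bernoulli_pmf (p t))"
  define f where "f h = map h (map x J)" for h :: "'x classifier"
  define E where "E h = {g. eliminates b (map (\<lambda>i. (x i, g i)) J) h hs}" for h
  have "finite (f ` H)"
    by (rule finite_subset[OF _ finite_lists_length_eq[of UNIV "length J"]]) (auto simp: f_def)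
  have "E h = E (inv_into H f (f h))" if "h \<in> H" for h
  proof -
    have "f (inv_into H f (f h)) = f h" using that by (simp add: f_inv_into_f)
    then have "\<forall>i\<in>set J. inv_into H f (f h) (x i) = h (x i)" by (simp add: f_def)
    then show ?thesis unfolding E_def using eliminates_cong by blast
  qed
  then have "{g. \<exists>h\<in>H. eliminates b (map (\<lambda>i. (x i, g i)) J) h hs} = (\<Union>\<pi>\<in>f ` H. E (inv_into H f \<pi>))"
    unfolding E_def by blast
  then have "measure_pmf.prob Q {g. \<exists>h\<in>H. eliminates b (map (\<lambda>i. (x i, g i)) J) h hs}
      \<le> (\<Sum>\<pi>\<in>f ` H. measure_pmf.prob Q (E (inv_into H f \<pi>)))"
    using \<open>finite (f ` H)\<close> by (simp only:) (rule measure_pmf.finite_measure_subadditive_finite; simp)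
  also have "\<dots> \<le> (\<Sum>\<pi>\<in>f ` H. exp (- real M * b\<^sup>2 / 2))"
    unfolding Q_def E_def by (intro sum_mono prob_eliminates_le assms(1-6))
  also have "\<dots> \<le> real S * exp (- real M * b\<^sup>2 / 2)"
    using assms(7) by (simp add: f_def)
  finally show ?thesis unfolding Q_def .
qed

lemma prob_eliminating_epoch_fixed_region_le:
  assumes "0 < M" "0 < b"
    and card: "\<And>J. set J \<subseteq> {..<T} \<Longrightarrow> length J = M \<Longrightarrow> card ((\<lambda>h. map h (map x J)) ` H) \<le> S"
  shows "measure_pmf.prob (Pi_pmf {s..<T} False (\<lambda>t. bernoulli_pmf (p t)))
           {g. eliminating_epoch H M b hs T s Dk (\<lambda>i. (x i, g i))} \<le> real T * real S * exp (- real M * b\<^sup>2 / 2)"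
proof -
  define Q where "Q = Pi_pmf {s..<T} False (\<lambda>t. bernoulli_pmf (p t))"
  define J where "J t = filter (\<lambda>i. x i \<in> Dk) [s..<Suc t]" for t
  define E where "E t = {g. length (J t) = M \<and> (\<exists>h\<in>H. eliminates b (map (\<lambda>i. (x i, g i)) (J t)) h hs)}" for t
  have "{g. eliminating_epoch H M b hs T s Dk (\<lambda>i. (x i, g i))} = (\<Union>t\<in>{s..<T}. E t)"
    unfolding eliminating_epoch_def E_def J_def by (auto simp del: upt_Suc)
  then have "measure_pmf.prob Q {g. eliminating_epoch H M b hs T s Dk (\<lambda>i. (x i, g i))}
      \<le> (\<Sum>t\<in>{s..<T}. measure_pmf.prob Q (E t))"
    by (simp add: measure_pmf.finite_measure_subadditive_finite)
  also have "\<dots> \<le> (\<Sum>t\<in>{s..<T}. real S * exp (- real M * b\<^sup>2 / 2))"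
  proof (rule sum_mono)
    fix t assume t: "t \<in> {s..<T}"
    show "measure_pmf.prob Q (E t) \<le> real S * exp (- real M * b\<^sup>2 / 2)"
    proof (cases "length (J t) = M")
      case True
      have "distinct (J t)" "set (J t) \<subseteq> {s..<T}" using t by (auto simp: J_def)
      have "measure_pmf.prob Q (E t) = measure_pmf.prob Q
              {g. \<exists>h\<in>H. eliminates b (map (\<lambda>i. (x i, g i)) (J t)) h hs}"
        using True by (simp add: E_def)
      also have "\<dots> \<le> real S * exp (- real M * b\<^sup>2 / 2)"
        unfolding Q_def using \<open>distinct (J t)\<close> \<open>set (J t) \<subseteq> {s..<T}\<close> True assms(1,2)
        by (intro prob_eliminated_by_some_le card) auto
      finally show ?thesis .
    qed (simp add: E_def)
  qed
  also have "\<dots> \<le> real T * real S * exp (- real M * b\<^sup>2 / 2)"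
    by (simp add: mult_right_mono mult.assoc)
  finally show ?thesis unfolding Q_def .
qed

text \<open>The query region of an epoch starting at \<open>s\<close> depends only on the labels before \<open>s\<close>,
  and the elimination event given that region only on the labels from \<open>s\<close> on; splitting the
  product measure at \<open>s\<close> therefore reduces the bound to the previous lemma.\<close>
lemma prob_eliminating_epoch_le:
  assumes "s < T" "0 < M" "0 < b"
    and card: "\<And>J. set J \<subseteq> {..<T} \<Longrightarrow> length J = M \<Longrightarrow> card ((\<lambda>h. map h (map x J)) ` H) \<le> S"
  shows "measure_pmf.prob (Pi_pmf {..<T} False (\<lambda>t. bernoulli_pmf (p t)))
           {y. eliminating_epoch H M b hs T s
                 (fst (snd (ola_state H M b amin (\<lambda>i. (x i, y i)) s))) (\<lambda>i. (x i, y i))}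
         \<le> real T * real S * exp (- real M * b\<^sup>2 / 2)"
proof -
  define E where "E = {y. eliminating_epoch H M b hs T s
                   (fst (snd (ola_state H M b amin (\<lambda>i. (x i, y i)) s))) (\<lambda>i. (x i, y i))}"
  define Q1 where "Q1 = Pi_pmf {..<s} False (\<lambda>t. bernoulli_pmf (p t))"
  define Q2 where "Q2 = Pi_pmf {s..<T} False (\<lambda>t. bernoulli_pmf (p t))"
  define merge where "merge = (\<lambda>(f :: nat \<Rightarrow> bool, g) i. if i \<in> {..<s} then f i else g i)"
  have U: "{..<s} \<union> {s..<T} = {..<T}" using assms(1) by auto
  have "Pi_pmf {..<T} False (\<lambda>t. bernoulli_pmf (p t)) = map_pmf merge (pair_pmf Q1 Q2)"
    unfolding Q1_def Q2_def merge_def U[symmetric] by (rule Pi_pmf_union) auto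
  moreover have "merge -` E = {(f, g). eliminating_epoch H M b hs T s
                   (fst (snd (ola_state H M b amin (\<lambda>i. (x i, f i)) s))) (\<lambda>i. (x i, g i))}"
  proof -
    have "ola_state H M b amin (\<lambda>i. (x i, merge (f, g) i)) s = ola_state H M b amin (\<lambda>i. (x i, f i)) s"
      for f g by (rule ola_state_cong) (simp add: merge_def)
    moreover have "eliminating_epoch H M b hs T s Dk (\<lambda>i. (x i, merge (f, g) i))
           = eliminating_epoch H M b hs T s Dk (\<lambda>i. (x i, g i))" for f g Dk
      by (rule eliminating_epoch_cong) (simp add: merge_def)
    ultimately have "(f, g) \<in> merge -` E \<longleftrightarrow> eliminating_epoch H M b hs T s
                   (fst (snd (ola_state H M b amin (\<lambda>i. (x i, f i)) s))) (\<lambda>i. (x i, g i))" for f g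
      unfolding E_def by simp
    then show ?thesis by auto
  qed
  ultimately have "measure_pmf.prob (Pi_pmf {..<T} False (\<lambda>t. bernoulli_pmf (p t))) E =
      measure_pmf.prob (pair_pmf Q1 Q2) {(f, g). eliminating_epoch H M b hs T s
        (fst (snd (ola_state H M b amin (\<lambda>i. (x i, f i)) s))) (\<lambda>i. (x i, g i))}"
    by (simp only: measure_map_pmf)
  also have "\<dots> \<le> real T * real S * exp (- real M * b\<^sup>2 / 2)"
    unfolding Q2_def using assms by (intro prob_pair_pmf_le prob_eliminating_epoch_fixed_region_le) auto
  finally show ?thesis unfolding E_def .
qed

lemma prob_some_eliminating_epoch_le:
  assumes "0 < M" "0 < b"
    and card: "\<And>J. set J \<subseteq> {..<T} \<Longrightarrow> length J = M \<Longrightarrow> card ((\<lambda>h. map h (map x J)) ` H) \<le> S"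
  shows "measure_pmf.prob (Pi_pmf {..<T} False (\<lambda>t. bernoulli_pmf (p t)))
           {y. \<exists>s<T. eliminating_epoch H M b hs T s
                 (fst (snd (ola_state H M b amin (\<lambda>i. (x i, y i)) s))) (\<lambda>i. (x i, y i))}
         \<le> real T ^ 2 * real S * exp (- real M * b\<^sup>2 / 2)"
proof -
  define Q where "Q = Pi_pmf {..<T} False (\<lambda>t. bernoulli_pmf (p t))"
  define E where "E s = {y. eliminating_epoch H M b hs T s
                   (fst (snd (ola_state H M b amin (\<lambda>i. (x i, y i)) s))) (\<lambda>i. (x i, y i))}" for s
  have "measure_pmf.prob Q (\<Union>s<T. E s) \<le> (\<Sum>s<T. real T * real S * exp (- real M * b\<^sup>2 / 2))"
    using prob_eliminating_epoch_le[OF _ assms] unfolding Q_def E_def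
    by (intro order_trans[OF measure_pmf.finite_measure_subadditive_finite] sum_mono) auto
  moreover have "(\<Union>s<T. E s) = {y. \<exists>s<T. eliminating_epoch H M b hs T s
                 (fst (snd (ola_state H M b amin (\<lambda>i. (x i, y i)) s))) (\<lambda>i. (x i, y i))}"
    unfolding E_def by blast
  ultimately show ?thesis
    unfolding Q_def by (simp add: power2_eq_square mult.assoc)
qed

lemma expected_ola_regret_le:
  assumes sel_ok: "\<forall>A x. A \<noteq> {} \<longrightarrow> (\<exists>h\<in>A. sel A x = h x)"
    and amin_mem: "\<forall>A Z. A \<noteq> {} \<longrightarrow> amin A Z \<in> A"
    and "hs \<in> H" "0 < M" "0 < b"
    and card: "\<And>J. set J \<subseteq> {..<T} \<Longrightarrow> length J = M \<Longrightarrow> card ((\<lambda>h. map h (map x J)) ` H) \<le> S"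
  shows "measure_pmf.expectation (Pi_pmf {..<T} False (\<lambda>t. bernoulli_pmf (p t)))
           (\<lambda>y. ola_regret H M b amin sel hs T (\<lambda>i. (x i, y i)))
         \<le> real T ^ 3 * real S * exp (- real M * b\<^sup>2 / 2)"
proof -
  define Q where "Q = Pi_pmf {..<T} False (\<lambda>t. bernoulli_pmf (p t))"
  define R where "R y = ola_regret H M b amin sel hs T (\<lambda>i. (x i, y i))" for y
  define E where "E = {y. hs \<notin> fst (ola_state H M b amin (\<lambda>i. (x i, y i)) T)}"
  have "measure_pmf.prob Q E \<le> measure_pmf.prob Q {y. \<exists>s<T. eliminating_epoch H M b hs T s
                 (fst (snd (ola_state H M b amin (\<lambda>i. (x i, y i)) s))) (\<lambda>i. (x i, y i))}"
    unfolding E_def using eliminated_imp_eliminating_epoch[OF amin_mem \<open>hs \<in> H\<close>]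
    by (intro measure_pmf.finite_measure_mono) (blast, simp)
  also have "\<dots> \<le> real T ^ 2 * real S * exp (- real M * b\<^sup>2 / 2)"
    unfolding Q_def by (rule prob_some_eliminating_epoch_le[OF assms(4,5) card])
  finally have prob_E: "measure_pmf.prob Q E \<le> real T ^ 2 * real S * exp (- real M * b\<^sup>2 / 2)" .
  have "R y \<le> real T * indicator E y" for y
    using ola_regret_le_eliminated[OF sel_ok] unfolding R_def E_def indicator_def mem_Collect_eq .
  then have "measure_pmf.expectation Q R \<le> measure_pmf.expectation Q (\<lambda>y. real T * indicator E y)"
    by (intro integral_mono measure_pmf.integrable_const_bound[where B="real T"])
       (simp_all add: R_def abs_ola_regret_le indicator_def)
  also have "\<dots> = real T * measure_pmf.prob Q E"
    by simp
  also have "\<dots> \<le> real T ^ 3 * real S * exp (- real M * b\<^sup>2 / 2)"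
    using mult_left_mono[OF prob_E, of "real T"] by (simp add: power_numeral_reduce mult.assoc)
  finally show ?thesis
    unfolding Q_def R_def .
qed

end

lemma card_restrictions_le_shatter_coeff:
  assumes xs: "set xs \<subseteq> X" "length xs = M"
  shows "card ((\<lambda>h. map h xs) ` H) \<le> shatter_coeff X H (2*M)"
proof -
  define ys where "ys = xs @ xs"
  have inj: "inj (\<lambda>l::bool list. l @ l)"
  proof (rule injI)
    fix l l' :: "bool list" assume "l @ l = l' @ l'"
    moreover have "length l = length l'"
      using arg_cong[OF calculation, of length] by simp
    ultimately show "l = l'" by simp
  qed
  have img: "(\<lambda>h. map h ys) ` H = (\<lambda>l. l @ l) ` ((\<lambda>h. map h xs) ` H)"
    unfolding ys_def by (auto simp: image_image)
  have c1: "card ((\<lambda>h. map h xs) ` H) = card ((\<lambda>h. map h ys) ` H)"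
    unfolding img by (rule card_image[symmetric]) (rule inj_on_subset[OF inj], simp)
  define C where "C = {card ((\<lambda>h. map h zs) ` H) | zs. length zs = 2*M \<and> set zs \<subseteq> X}"
  have mem: "card ((\<lambda>h. map h ys) ` H) \<in> C" unfolding C_def
    using xs by (intro CollectI exI[of _ ys]) (auto simp: ys_def)
  have bnd: "c \<le> 2^(2*M)" if "c \<in> C" for c
  proof -
    from that obtain zs where zs: "c = card ((\<lambda>h. map h zs) ` H)" "length zs = 2*M" unfolding C_def by auto
    have "(\<lambda>h. map h zs) ` H \<subseteq> {l. set l \<subseteq> (UNIV::bool set) \<and> length l = 2*M}" using zs by auto
    then have "card ((\<lambda>h. map h zs) ` H) \<le> card {l. set l \<subseteq> (UNIV::bool set) \<and> length l = 2*M}"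
      by (intro card_mono finite_lists_length_eq) auto
    also have "\<dots> = 2^(2*M)" using card_lists_length_eq[of "UNIV::bool set" "2*M"] by simp
    finally show ?thesis using zs by simp
  qed
  have finC: "finite C" by (rule finite_subset[of _ "{..2^(2*M)}"]) (use bnd in auto)
  have "card ((\<lambda>h. map h ys) ` H) \<le> Max C" by (rule Max_ge[OF finC mem])
  then show ?thesis using c1 unfolding shatter_coeff_def C_def by simp
qed

lemma shatter_coeff_ge_1:
  assumes "H \<noteq> {}" "x0 \<in> X"
  shows "1 \<le> shatter_coeff X H (2*M)"
proof -
  have "card ((\<lambda>h. map h (replicate M x0)) ` H) \<le> shatter_coeff X H (2*M)"
    by (rule card_restrictions_le_shatter_coeff) (use assms in auto)
  moreover have "finite ((\<lambda>h. map h (replicate M x0)) ` H)"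
  proof (rule finite_subset)
    show "(\<lambda>h. map h (replicate M x0)) ` H \<subseteq> {l. set l \<subseteq> (UNIV::bool set) \<and> length l = M}" by auto
  qed (rule finite_lists_length_eq, simp)
  then have "1 \<le> card ((\<lambda>h. map h (replicate M x0)) ` H)"
    using assms(1) by (simp add: Suc_le_eq card_gt_0_iff)
  ultimately show ?thesis by simp
qed

lemma beta_tail_bound:
  fixes T S M :: nat
  assumes "1 \<le> T" "1 \<le> S" "0 < M"
  defines "b \<equiv> sqrt (4 / real M * ln (16 * real T ^ 2 * real S ^ 2))"
  shows "0 < b \<and> real T ^ 3 * real S * exp (- real M * b\<^sup>2 / 2) \<le> 1/2"
proof -
  define K where "K = 16 * real T ^ 2 * real S ^ 2"
  have "1 \<le> real T" "1 \<le> real S" using assms(1,2) by simp_all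
  then have "1 \<le> real T ^ 2" "1 \<le> real S ^ 2" by simp_all
  then have "16 \<le> K" unfolding K_def using mult_mono[of 1 "real T ^ 2" 1 "real S ^ 2"] by simp
  have "0 < 4 / real M * ln K" using \<open>16 \<le> K\<close> assms(3) by simp
  then have "0 < b" and b2: "b\<^sup>2 = 4 / real M * ln K" unfolding b_def K_def by simp_all
  have "- real M * b\<^sup>2 / 2 = - (2 * ln K)"
    unfolding b2 using assms(3) by simp
  moreover have "exp (2 * ln K) = K * K"
    using \<open>16 \<le> K\<close> by (simp only: mult_2 exp_add) simp
  ultimately have e: "exp (- real M * b\<^sup>2 / 2) = 1 / (K * K)"
    by (simp add: exp_minus inverse_eq_divide)
  have "real T ^ 3 * real S \<le> real T ^ 4 * real S ^ 4"
    using \<open>1 \<le> real T\<close> \<open>1 \<le> real S\<close>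
    by (intro mult_mono power_increasing) (auto simp: power_increasing[of 1 4 "real S", simplified])
  also have "\<dots> \<le> K * K / 2"
    by (simp add: K_def power2_eq_square eval_nat_numeral)
  finally have "real T ^ 3 * real S * (1 / (K * K)) \<le> 1 / 2"
    using \<open>16 \<le> K\<close> by (simp add: field_simps)
  then show ?thesis using \<open>0 < b\<close> e by simp
qed

lemma expected_ola_regret_le_half:
  fixes x :: "nat \<Rightarrow> 'x" and \<eta> :: "'x \<Rightarrow> real"
  assumes sel_ok: "\<forall>A x. A \<noteq> {} \<longrightarrow> (\<exists>h\<in>A. sel A x = h x)"
    and amin_mem: "\<forall>A Z. A \<noteq> {} \<longrightarrow> amin A Z \<in> A"
    and bayes_in_H: "(\<lambda>x. 1/2 \<le> \<eta> x) \<in> H"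
    and x: "\<forall>t<T. x t \<in> X" and \<eta>: "\<forall>x\<in>X. 0 \<le> \<eta> x \<and> \<eta> x \<le> 1"
  shows "measure_pmf.expectation (Pi_pmf {..<T} False (\<lambda>t. bernoulli_pmf (\<eta> (x t))))
           (\<lambda>y. ola_regret H M (beta X H T M) amin sel (\<lambda>x. 1/2 \<le> \<eta> x) T (\<lambda>i. (x i, y i))) \<le> 1/2"
    (is "measure_pmf.expectation ?Q ?R \<le> _")
proof (cases "M = 0 \<or> T = 0")
  case True
  have "?R y \<le> 0" for y
  proof (cases "T = 0")
    case False
    with True have "M = 0" by simp
    then show ?thesis
      using ola_regret_le_eliminated[OF sel_ok, of H M "beta X H T M" amin "\<lambda>x. 1/2 \<le> \<eta> x" T]
        bayes_in_H by (simp add: ola_state_M0)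
  qed (simp add: ola_regret_def)
  then have "0 \<le> measure_pmf.expectation ?Q (\<lambda>y. - ?R y)"
    by (intro integral_nonneg_AE) simp
  then show ?thesis by simp
next
  case False
  define S where "S = shatter_coeff X H (2 * M)"
  have "1 \<le> S"
    unfolding S_def using bayes_in_H x False by (intro shatter_coeff_ge_1) auto
  then have b: "0 < beta X H T M" and bound: "real T ^ 3 * real S * exp (- real M * (beta X H T M)\<^sup>2 / 2) \<le> 1/2"
    using beta_tail_bound[of T S M] False unfolding beta_def S_def by auto
  have "measure_pmf.expectation ?Q ?R \<le> real T ^ 3 * real S * exp (- real M * (beta X H T M)\<^sup>2 / 2)"
  proof (rule expected_ola_regret_le[OF _ _ sel_ok amin_mem bayes_in_H])
    show "\<forall>t<T. 0 \<le> \<eta> (x t) \<and> \<eta> (x t) \<le> 1" using x \<eta> by simp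
    show "card ((\<lambda>h. map h (map x J)) ` H) \<le> S" if "set J \<subseteq> {..<T}" "length J = M" for J
      unfolding S_def using that x by (intro card_restrictions_le_shatter_coeff) auto
  qed (use False b in simp_all)
  with bound show ?thesis by linarith
qed

section \<open>Disintegration of the example distribution\<close>

definition label_prob :: "('x \<Rightarrow> real) \<Rightarrow> 'x \<Rightarrow> bool \<Rightarrow> ennreal" where
  "label_prob \<eta> x c = ennreal (if c then \<eta> x else 1 - \<eta> x)"

lemma emeasure_times_eq_sum:
  assumes "sets N = sets (MX \<Otimes>\<^sub>M count_space (UNIV::bool set))" "a \<in> sets MX"
  shows "emeasure N (a \<times> B) = (\<Sum>c\<in>B. emeasure N (a \<times> {c}))"
proof -
  have S: "(\<lambda>c. a \<times> {c}) ` B \<subseteq> sets N"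
  proof
    fix X assume "X \<in> (\<lambda>c. a \<times> {c}) ` B"
    then obtain c where "X = a \<times> {c}" by blast
    moreover have "a \<times> {c} \<in> sets (MX \<Otimes>\<^sub>M count_space (UNIV::bool set))"
      by (rule pair_measureI[OF assms(2)]) simp
    ultimately show "X \<in> sets N" using assms(1) by simp
  qed
  have dj: "disjoint_family_on (\<lambda>c. a \<times> {c}) B" unfolding disjoint_family_on_def by blast
  have fin: "finite B" by (rule finite_subset[of _ UNIV]) auto
  have "(\<Sum>c\<in>B. emeasure N (a \<times> {c})) = emeasure N (\<Union>c\<in>B. a \<times> {c})"
    by (rule sum_emeasure[OF S dj fin])
  also have "(\<Union>c\<in>B. a \<times> {c}) = a \<times> B" by blast
  finally show ?thesis ..
qed

lemma nn_integral_times_count_space_bool: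
  assumes "f \<in> borel_measurable (M1 \<Otimes>\<^sub>M count_space (UNIV::bool set))"
  shows "integral\<^sup>N (M1 \<Otimes>\<^sub>M count_space UNIV) f = (\<integral>\<^sup>+x. f (x, True) + f (x, False) \<partial>M1)"
proof -
  have "integral\<^sup>N (M1 \<Otimes>\<^sub>M count_space UNIV) f = (\<integral>\<^sup>+x. \<integral>\<^sup>+y. f (x, y) \<partial>count_space UNIV \<partial>M1)"
    by (rule sigma_finite_measure.nn_integral_fst[symmetric, OF sigma_finite_measure_count_space_finite assms]) simp
  also have "\<dots> = (\<integral>\<^sup>+x. f (x, True) + f (x, False) \<partial>M1)"
    by (intro nn_integral_cong) (simp add: nn_integral_count_space_finite UNIV_bool add.commute)
  finally show ?thesis .
qed

definition labelings :: "nat \<Rightarrow> (nat \<Rightarrow> bool) set" where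
  "labelings n = PiE_dflt {..<n} False (\<lambda>_. UNIV)"

definition labeling_prob :: "('x \<Rightarrow> real) \<Rightarrow> nat \<Rightarrow> (nat \<Rightarrow> 'x) \<Rightarrow> (nat \<Rightarrow> bool) \<Rightarrow> ennreal" where
  "labeling_prob \<eta> n x y = (\<Prod>t<n. label_prob \<eta> (x t) (y t))"

definition zip_seq :: "nat \<Rightarrow> (nat \<Rightarrow> 'x) \<Rightarrow> (nat \<Rightarrow> bool) \<Rightarrow> nat \<Rightarrow> 'x \<times> bool" where
  "zip_seq n x y = (\<lambda>t\<in>{..<n}. (x t, y t))"

lemma finite_labelings: "finite (labelings n)"
  unfolding labelings_def by (rule finite_PiE_dflt) auto

lemma labelings_0: "labelings 0 = {\<lambda>_. False}"
  unfolding labelings_def PiE_dflt_def by auto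

lemma bij_betw_labelings_Suc: "bij_betw (\<lambda>(y,c). y(n := c)) (labelings n \<times> (UNIV::bool set)) (labelings (Suc n))"
proof (rule bij_betwI')
  fix a b assume "a \<in> labelings n \<times> (UNIV::bool set)" "b \<in> labelings n \<times> (UNIV::bool set)"
  then obtain y c y' c' where ab: "a = (y,c)" "b = (y',c')" "y \<in> labelings n" "y' \<in> labelings n" by auto
  have "y n = False" "y' n = False" using ab unfolding labelings_def PiE_dflt_def by auto
  then show "((case a of (y, c) \<Rightarrow> y(n := c)) = (case b of (y, c) \<Rightarrow> y(n := c))) = (a = b)"
    using ab by (auto simp: fun_eq_iff)
next
  fix a assume "a \<in> labelings n \<times> (UNIV::bool set)"
  then show "(case a of (y, c) \<Rightarrow> y(n := c)) \<in> labelings (Suc n)"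
    unfolding labelings_def PiE_dflt_def by auto
next
  fix y' assume y': "y' \<in> labelings (Suc n)"
  show "\<exists>a\<in>labelings n \<times> (UNIV::bool set). y' = (case a of (y, c) \<Rightarrow> y(n := c))"
    using y' unfolding labelings_def PiE_dflt_def
    by (intro bexI[of _ "(y'(n := False), y' n)"]) (auto simp: fun_eq_iff)
qed

lemma sum_labelings_Suc:
  "(\<Sum>y'\<in>labelings (Suc n). F y') = (\<Sum>y\<in>labelings n. F (y(n := True)) + F (y(n := False)))"
proof -
  have "(\<Sum>y'\<in>labelings (Suc n). F y') = (\<Sum>p\<in>labelings n \<times> (UNIV::bool set). F ((\<lambda>(y,c). y(n := c)) p))"
    by (rule sum.reindex_bij_betw[OF bij_betw_labelings_Suc, symmetric])
  also have "\<dots> = (\<Sum>(y,c)\<in>labelings n \<times> (UNIV::bool set). F (y(n := c)))"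
    by (rule sum.cong) auto
  also have "\<dots> = (\<Sum>y\<in>labelings n. \<Sum>c\<in>UNIV. F (y(n := c)))"
    by (rule sum.cartesian_product[symmetric])
  also have "\<dots> = (\<Sum>y\<in>labelings n. F (y(n := True)) + F (y(n := False)))"
    by (simp add: UNIV_bool add.commute)
  finally show ?thesis .
qed

lemma labeling_prob_update: "labeling_prob \<eta> (Suc n) (x(n := x')) (y(n := c)) = labeling_prob \<eta> n x y * label_prob \<eta> x' c"
proof -
  have "(\<Prod>t<n. label_prob \<eta> ((x(n := x')) t) ((y(n := c)) t)) = (\<Prod>t<n. label_prob \<eta> (x t) (y t))"
    by (intro prod.cong refl) auto
  then show ?thesis unfolding labeling_prob_def by simp
qed

lemma zip_seq_update: "zip_seq (Suc n) (x(n := x')) (y(n := c)) = (zip_seq n x y)(n := (x', c))"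
  unfolding zip_seq_def by (auto simp: fun_eq_iff)

lemma sum_labelings_eq_expectation:
  assumes "\<forall>t<n. 0 \<le> \<eta> (x t) \<and> \<eta> (x t) \<le> 1" and "\<forall>y. 0 \<le> g y"
  shows "(\<Sum>y\<in>labelings n. labeling_prob \<eta> n x y * ennreal (g y)) =
         ennreal (measure_pmf.expectation (Pi_pmf {..<n} False (\<lambda>t. bernoulli_pmf (\<eta> (x t)))) g)"
proof -
  define Q where "Q = Pi_pmf {..<n} False (\<lambda>t. bernoulli_pmf (\<eta> (x t)))"
  have "labeling_prob \<eta> n x y = ennreal (pmf Q y)" if "y \<in> labelings n" for y
  proof -
    have "pmf Q y = (\<Prod>t<n. pmf (bernoulli_pmf (\<eta> (x t))) (y t))"
      unfolding Q_def using that by (intro pmf_Pi') (auto simp: labelings_def PiE_dflt_def)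
    also have "\<dots> = (\<Prod>t<n. if y t then \<eta> (x t) else 1 - \<eta> (x t))"
      using assms(1) by (intro prod.cong) auto
    finally have "ennreal (pmf Q y) = (\<Prod>t<n. ennreal (if y t then \<eta> (x t) else 1 - \<eta> (x t)))"
      using assms(1) by (subst prod_ennreal) auto
    then show ?thesis unfolding labeling_prob_def label_prob_def by simp
  qed
  then have "(\<Sum>y\<in>labelings n. labeling_prob \<eta> n x y * ennreal (g y)) = (\<Sum>y\<in>labelings n. ennreal (g y * pmf Q y))"
    using assms(2) by (intro sum.cong) (simp_all add: ennreal_mult'' mult.commute)
  also have "\<dots> = ennreal (\<Sum>y\<in>labelings n. g y * pmf Q y)"
    using assms(2) by (intro sum_ennreal) simp
  also have "(\<Sum>y\<in>labelings n. g y * pmf Q y) = measure_pmf.expectation Q g"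
  proof (rule integral_measure_pmf_real[symmetric])
    fix y assume "y \<in> set_pmf Q"
    then show "y \<in> labelings n"
      unfolding Q_def labelings_def using set_Pi_pmf_subset[of "{..<n}" False] by (auto simp: PiE_dflt_def)
  qed (rule finite_labelings)
  finally show ?thesis unfolding Q_def .
qed

context
  fixes MX :: "'x measure" and D :: "('x \<times> bool) measure" and \<eta> :: "'x \<Rightarrow> real"
  assumes D_prob: "prob_space D"
    and D_sets: "sets D = sets (MX \<Otimes>\<^sub>M count_space UNIV)"
    and eta_meas: "\<eta> \<in> borel_measurable MX"
    and eta_range: "\<forall>x\<in>space MX. 0 \<le> \<eta> x \<and> \<eta> x \<le> 1"
    and eta_cond: "\<forall>A\<in>sets MX. measure D (A \<times> {True}) = (LINT x:A|distr D MX fst. \<eta> x)"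
begin

lemma measurable_fst_D: "fst \<in> D \<rightarrow>\<^sub>M MX"
  using measurable_cong_sets[OF D_sets refl, of MX] measurable_fst[of MX "count_space UNIV"] by simp

lemma prob_space_PX: "prob_space (distr D MX fst)"
  by (rule prob_space.prob_space_distr[OF D_prob measurable_fst_D])

lemma eta_measurable_PX: "\<eta> \<in> borel_measurable (distr D MX fst)"
  using eta_meas by (simp add: measurable_cong_sets[OF sets_distr refl])

lemma space_D: "space D = space MX \<times> UNIV"
  using sets_eq_imp_space_eq[OF D_sets] by (simp add: space_pair_measure)

lemma label_prob_measurable: "(\<lambda>z. label_prob \<eta> (fst z) (snd z)) \<in> borel_measurable (distr D MX fst \<Otimes>\<^sub>M count_space UNIV)"
proof -
  have "(\<lambda>z. if snd z then \<eta> (fst z) else 1 - \<eta> (fst z)) \<in> borel_measurable (distr D MX fst \<Otimes>\<^sub>M count_space UNIV)"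
    using eta_measurable_PX by measurable
  then show ?thesis unfolding label_prob_def by measurable
qed

lemma label_prob_indicator_measurable:
  assumes a: "a \<in> sets MX"
  shows "(\<lambda>x. label_prob \<eta> x c * indicator a x) \<in> borel_measurable (distr D MX fst)"
proof -
  have f: "(\<lambda>x. if c then \<eta> x else 1 - \<eta> x) \<in> borel_measurable (distr D MX fst)"
    using eta_measurable_PX by (cases c) auto
  have a': "a \<in> sets (distr D MX fst)" using a by simp
  have "(\<lambda>x. ennreal (if c then \<eta> x else 1 - \<eta> x)) \<in> borel_measurable (distr D MX fst)"
    using f by (rule measurable_compose[OF _ measurable_ennreal])
  moreover have "indicator a \<in> borel_measurable (distr D MX fst)"
    using a' by (rule borel_measurable_indicator)
  ultimately show ?thesis unfolding label_prob_def by (rule borel_measurable_times_ennreal)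
qed

lemma emeasure_D_True:
  assumes a: "a \<in> sets MX"
  shows "emeasure D (a \<times> {True}) = (\<integral>\<^sup>+x. label_prob \<eta> x True * indicator a x \<partial>distr D MX fst)"
proof -
  interpret PX: prob_space "distr D MX fst" by (rule prob_space_PX)
  interpret D: prob_space D by (rule D_prob)
  have int: "integrable (distr D MX fst) (\<lambda>x. indicator a x * \<eta> x)"
  proof (rule PX.integrable_const_bound[where B=1])
    show "AE x in distr D MX fst. norm (indicator a x * \<eta> x) \<le> 1"
      using eta_range by (intro AE_I2) (auto simp: indicator_def)
    show "(\<lambda>x. indicator a x * \<eta> x) \<in> borel_measurable (distr D MX fst)"
      using eta_measurable_PX a by measurable
  qed
  have "emeasure D (a \<times> {True}) = ennreal (measure D (a \<times> {True}))"
    by (simp add: D.emeasure_eq_measure)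
  also have "\<dots> = ennreal (\<integral>x. indicator a x * \<eta> x \<partial>distr D MX fst)"
    using eta_cond a by (simp add: set_lebesgue_integral_def)
  also have "\<dots> = (\<integral>\<^sup>+x. ennreal (indicator a x * \<eta> x) \<partial>distr D MX fst)"
    using eta_range by (intro nn_integral_eq_integral[symmetric] int AE_I2) (auto simp: indicator_def)
  also have "\<dots> = (\<integral>\<^sup>+x. label_prob \<eta> x True * indicator a x \<partial>distr D MX fst)"
    by (intro nn_integral_cong) (auto simp: label_prob_def indicator_def)
  finally show ?thesis .
qed

lemma emeasure_D_False:
  assumes a: "a \<in> sets MX"
  shows "emeasure D (a \<times> {False}) = (\<integral>\<^sup>+x. label_prob \<eta> x False * indicator a x \<partial>distr D MX fst)"
proof -
  interpret D: prob_space D by (rule D_prob)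
  have e1: "emeasure D (a \<times> UNIV) = emeasure D (a \<times> {True}) + emeasure D (a \<times> {False})"
    using emeasure_times_eq_sum[OF D_sets a, of UNIV] by (simp add: UNIV_bool)
  have e2: "emeasure D (a \<times> UNIV) = emeasure (distr D MX fst) a"
    using a sets.sets_into_space[OF a] by (subst emeasure_distr[OF measurable_fst_D a]) (auto simp: space_D intro!: arg_cong[where f="emeasure D"])
  have e3: "emeasure (distr D MX fst) a = (\<integral>\<^sup>+x. indicator a x \<partial>distr D MX fst)"
    using a by simp
  have e4: "(\<integral>\<^sup>+x. indicator a x \<partial>distr D MX fst) =
      (\<integral>\<^sup>+x. label_prob \<eta> x True * indicator a x \<partial>distr D MX fst) + (\<integral>\<^sup>+x. label_prob \<eta> x False * indicator a x \<partial>distr D MX fst)"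
  proof -
    have "(\<integral>\<^sup>+x. indicator a x \<partial>distr D MX fst) =
          (\<integral>\<^sup>+x. label_prob \<eta> x True * indicator a x + label_prob \<eta> x False * indicator a x \<partial>distr D MX fst)"
    proof (intro nn_integral_cong)
      fix x assume "x \<in> space (distr D MX fst)"
      then have "0 \<le> \<eta> x" "\<eta> x \<le> 1" using eta_range by auto
      then show "indicator a x = label_prob \<eta> x True * indicator a x + label_prob \<eta> x False * indicator a x"
        by (auto simp: label_prob_def indicator_def ennreal_plus[symmetric] simp del: ennreal_plus)
    qed
    also have "\<dots> = (\<integral>\<^sup>+x. label_prob \<eta> x True * indicator a x \<partial>distr D MX fst) + (\<integral>\<^sup>+x. label_prob \<eta> x False * indicator a x \<partial>distr D MX fst)"
      using a by (intro nn_integral_add label_prob_indicator_measurable)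
    finally show ?thesis .
  qed
  have "emeasure D (a \<times> {True}) + emeasure D (a \<times> {False}) =
      emeasure D (a \<times> {True}) + (\<integral>\<^sup>+x. label_prob \<eta> x False * indicator a x \<partial>distr D MX fst)"
    using e1 e2 e3 e4 emeasure_D_True[OF a] by metis
  moreover have "emeasure D (a \<times> {True}) \<noteq> \<top>" using D.emeasure_finite[of "a \<times> {True}"] by simp
  ultimately show ?thesis by (simp add: ennreal_add_left_cancel)
qed

lemma emeasure_density_label_prob:
  assumes a: "a \<in> sets MX"
  shows "emeasure (density (distr D MX fst \<Otimes>\<^sub>M count_space UNIV) (\<lambda>z. label_prob \<eta> (fst z) (snd z))) (a \<times> {c})
           = (\<integral>\<^sup>+x. label_prob \<eta> x c * indicator a x \<partial>distr D MX fst)"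
proof -
  have ac: "a \<times> {c} \<in> sets (distr D MX fst \<Otimes>\<^sub>M count_space UNIV)"
    using a by (simp add: sets_pair_measure_cong[OF sets_distr refl])
  have "emeasure (density (distr D MX fst \<Otimes>\<^sub>M count_space UNIV) (\<lambda>z. label_prob \<eta> (fst z) (snd z))) (a \<times> {c})
      = (\<integral>\<^sup>+z. label_prob \<eta> (fst z) (snd z) * indicator (a \<times> {c}) z \<partial>(distr D MX fst \<Otimes>\<^sub>M count_space UNIV))"
    by (rule emeasure_density[OF label_prob_measurable ac])
  also have "\<dots> = (\<integral>\<^sup>+x. label_prob \<eta> x c * indicator a x \<partial>distr D MX fst)"
  proof (subst nn_integral_times_count_space_bool, goal_cases)
    case 1 show ?case using label_prob_measurable ac by measurable
  next
    case 2 show ?case by (intro nn_integral_cong) (cases c; simp add: indicator_def)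
  qed
  finally show ?thesis .
qed

lemma D_eq_density: "D = density (distr D MX fst \<Otimes>\<^sub>M count_space UNIV) (\<lambda>z. label_prob \<eta> (fst z) (snd z))"
  (is "D = ?N")
proof -
  interpret D: prob_space D by (rule D_prob)
  define E where "E = {a \<times> b | a b. a \<in> sets MX \<and> b \<in> sets (count_space (UNIV::bool set))}"
  have setsN: "sets ?N = sets (MX \<Otimes>\<^sub>M count_space UNIV)"
    by (simp add: sets_pair_measure_cong[OF sets_distr refl])
  have sig: "sets (MX \<Otimes>\<^sub>M count_space UNIV) = sigma_sets (space MX \<times> UNIV) E"
    unfolding E_def by (simp add: sets_pair_measure)
  show ?thesis
  proof (rule measure_eqI_generator_eq[where E=E and \<Omega>="space MX \<times> UNIV" and A="\<lambda>_. space MX \<times> UNIV"])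
    show "Int_stable E" unfolding E_def by (rule Int_stable_pair_measure_generator)
    show "E \<subseteq> Pow (space MX \<times> UNIV)" unfolding E_def using sets.sets_into_space by fastforce
    show "sets D = sigma_sets (space MX \<times> UNIV) E" using D_sets sig by simp
    show "sets ?N = sigma_sets (space MX \<times> UNIV) E" using setsN sig by simp
    show "range (\<lambda>_. space MX \<times> UNIV) \<subseteq> E" unfolding E_def by auto
    show "(\<Union>i. space MX \<times> UNIV) = space MX \<times> UNIV" by simp
    show "emeasure D (space MX \<times> UNIV) \<noteq> \<infinity>" for i::nat by simp
    fix X assume "X \<in> E"
    then obtain a B where X: "X = a \<times> B" "a \<in> sets MX" unfolding E_def by auto
    have "emeasure D (a \<times> B) = (\<Sum>c\<in>B. emeasure D (a \<times> {c}))"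
      by (rule emeasure_times_eq_sum[OF D_sets X(2)])
    also have "\<dots> = (\<Sum>c\<in>B. emeasure ?N (a \<times> {c}))"
    proof (intro sum.cong refl)
      fix c show "emeasure D (a \<times> {c}) = emeasure ?N (a \<times> {c})"
        using emeasure_density_label_prob[OF X(2)] emeasure_D_True[OF X(2)] emeasure_D_False[OF X(2)] by (cases c) auto
    qed
    also have "\<dots> = emeasure ?N (a \<times> B)"
      by (rule emeasure_times_eq_sum[OF setsN X(2), symmetric])
    finally show "emeasure D X = emeasure ?N X" using X by simp
  qed
qed

lemma nn_integral_D:
  assumes f: "f \<in> borel_measurable (MX \<Otimes>\<^sub>M count_space UNIV)"
  shows "(\<integral>\<^sup>+z. f z \<partial>D) = (\<integral>\<^sup>+x. label_prob \<eta> x True * f (x, True) + label_prob \<eta> x False * f (x, False) \<partial>distr D MX fst)"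
proof -
  have f': "f \<in> borel_measurable (distr D MX fst \<Otimes>\<^sub>M count_space UNIV)"
    using f by (simp add: measurable_cong_sets[OF sets_pair_measure_cong[OF sets_distr refl] refl])
  have "(\<integral>\<^sup>+z. f z \<partial>D) = (\<integral>\<^sup>+z. f z \<partial>density (distr D MX fst \<Otimes>\<^sub>M count_space UNIV) (\<lambda>z. label_prob \<eta> (fst z) (snd z)))"
    by (subst D_eq_density) (rule refl)
  also have "\<dots> = (\<integral>\<^sup>+z. label_prob \<eta> (fst z) (snd z) * f z \<partial>(distr D MX fst \<Otimes>\<^sub>M count_space UNIV))"
    by (rule nn_integral_density[OF label_prob_measurable f'])
  also have "\<dots> = (\<integral>\<^sup>+x. label_prob \<eta> x True * f (x, True) + label_prob \<eta> x False * f (x, False) \<partial>distr D MX fst)"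
  proof (subst nn_integral_times_count_space_bool, goal_cases)
    case 1 show ?case using label_prob_measurable f' by measurable
  qed simp
  finally show ?thesis .
qed


lemma measurable_label_pair: "(\<lambda>x'. (x', c)) \<in> distr D MX fst \<rightarrow>\<^sub>M D"
proof -
  have 1: "(\<lambda>x'. (x', c)) \<in> MX \<rightarrow>\<^sub>M MX \<Otimes>\<^sub>M count_space UNIV" by measurable
  have "measurable (distr D MX fst) D = measurable MX (MX \<Otimes>\<^sub>M count_space UNIV)"
    by (rule measurable_cong_sets) (simp_all add: D_sets)
  then show ?thesis using 1 by simp
qed

lemma label_prob_measurable_PX: "(\<lambda>x'. label_prob \<eta> x' c) \<in> borel_measurable (distr D MX fst)"
proof -
  have f: "(\<lambda>x. if c then \<eta> x else 1 - \<eta> x) \<in> borel_measurable (distr D MX fst)"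
    using eta_measurable_PX by (cases c) auto
  show ?thesis unfolding label_prob_def
    using f by (rule measurable_compose[OF _ measurable_ennreal])
qed

lemma zip_seq_measurable: "(\<lambda>x. zip_seq n x y) \<in> PiM {..<n} (\<lambda>_. distr D MX fst) \<rightarrow>\<^sub>M PiM {..<n} (\<lambda>_. D)"
  unfolding zip_seq_def
proof (rule measurable_restrict)
  fix t assume "t \<in> {..<n}"
  then show "(\<lambda>x. (x t, y t)) \<in> PiM {..<n} (\<lambda>_. distr D MX fst) \<rightarrow>\<^sub>M D"
  proof -
    have "(\<lambda>x. x t) \<in> PiM {..<n} (\<lambda>_. distr D MX fst) \<rightarrow>\<^sub>M distr D MX fst"
      using \<open>t \<in> {..<n}\<close> by (rule measurable_component_singleton)
    from measurable_compose[OF this measurable_label_pair[of "y t"]] show ?thesis by simp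
  qed
qed

lemma labeling_prob_measurable:
  assumes "{..<n} \<subseteq> I"
  shows "(\<lambda>x. labeling_prob \<eta> n x y) \<in> borel_measurable (PiM I (\<lambda>_. distr D MX fst))"
  unfolding labeling_prob_def
proof (rule borel_measurable_prod_ennreal)
  fix t assume "t \<in> {..<n}"
  then show "(\<lambda>x. label_prob \<eta> (x t) (y t)) \<in> borel_measurable (PiM I (\<lambda>_. distr D MX fst))"
  proof -
    have "(\<lambda>x. x t) \<in> PiM I (\<lambda>_. distr D MX fst) \<rightarrow>\<^sub>M distr D MX fst"
      using \<open>t \<in> {..<n}\<close> assms by (intro measurable_component_singleton) auto
    from measurable_compose[OF this label_prob_measurable_PX[of "y t"]] show ?thesis by simp
  qed
qed

lemma zip_seq_in_space:
  assumes "x \<in> space (PiM I (\<lambda>_. distr D MX fst))" "{..<n} \<subseteq> I"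
  shows "zip_seq n x y \<in> space (PiM {..<n} (\<lambda>_. D))"
  using assms unfolding zip_seq_def
  by (auto simp: space_PiM space_D PiE_iff)

lemma nn_integral_D_update:
  assumes f: "f \<in> borel_measurable (PiM (insert n I) (\<lambda>_. D))"
    and "n \<notin> I" and v: "v \<in> space (PiM I (\<lambda>_. D))"
  shows "(\<integral>\<^sup>+z. f (v(n := z)) \<partial>D) =
         (\<integral>\<^sup>+x. label_prob \<eta> x True * f (v(n := (x, True))) + label_prob \<eta> x False * f (v(n := (x, False)))
           \<partial>distr D MX fst)"
proof (rule nn_integral_D)
  have "(\<lambda>z. f (v(n := z))) \<in> borel_measurable D"
    by (rule measurable_compose[OF measurable_component_update[OF v \<open>n \<notin> I\<close>] f])
  then show "(\<lambda>z. f (v(n := z))) \<in> borel_measurable (MX \<Otimes>\<^sub>M count_space UNIV)"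
    by (simp add: measurable_cong_sets[OF D_sets refl])
qed

lemma nn_integral_PiM_D_labelings:
  "f \<in> borel_measurable (PiM {..<n} (\<lambda>_. D)) \<Longrightarrow>
   (\<integral>\<^sup>+\<omega>. f \<omega> \<partial>PiM {..<n} (\<lambda>_. D)) =
   (\<integral>\<^sup>+x. (\<Sum>y\<in>labelings n. labeling_prob \<eta> n x y * f (zip_seq n x y)) \<partial>PiM {..<n} (\<lambda>_. distr D MX fst))"
proof (induction n arbitrary: f)
  case 0
  have zip_seq_0: "zip_seq 0 x y = (\<lambda>_. undefined)" for x y
    unfolding zip_seq_def by auto
  show ?case
    by (simp add: PiM_empty labelings_0 labeling_prob_def zip_seq_0 nn_integral_count_space_finite)
next
  case (Suc n)
  define I where "I = {..<n}"
  have I: "{..<Suc n} = insert n I" "n \<notin> I" "finite I" unfolding I_def by auto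
  interpret PD: product_sigma_finite "\<lambda>_::nat. D"
    unfolding product_sigma_finite_def using prob_space_imp_sigma_finite[OF D_prob] by simp
  interpret PP: product_sigma_finite "\<lambda>_::nat. distr D MX fst"
    unfolding product_sigma_finite_def using prob_space_imp_sigma_finite[OF prob_space_PX] by simp
  have f: "f \<in> borel_measurable (PiM (insert n I) (\<lambda>_. D))"
    using Suc.prems I by simp
  define g where "g v = (\<integral>\<^sup>+z. f (v(n := z)) \<partial>D)" for v
  have "(\<lambda>p. f ((fst p)(n := snd p))) \<in> borel_measurable (PiM I (\<lambda>_. D) \<Otimes>\<^sub>M D)"
    using measurable_compose[OF measurable_add_dim f] by (simp add: case_prod_unfold)
  from sigma_finite_measure.borel_measurable_nn_integral_fst[OF prob_space_imp_sigma_finite[OF D_prob] this]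
  have g_meas: "g \<in> borel_measurable (PiM I (\<lambda>_. D))"
    unfolding g_def by simp
  have "(\<integral>\<^sup>+\<omega>. f \<omega> \<partial>PiM {..<Suc n} (\<lambda>_. D)) = (\<integral>\<^sup>+\<omega>. g \<omega> \<partial>PiM I (\<lambda>_. D))"
    unfolding I(1) g_def by (rule PD.product_nn_integral_insert[OF I(3) I(2) f])
  also have "\<dots> = (\<integral>\<^sup>+x. (\<Sum>y\<in>labelings n. labeling_prob \<eta> n x y * g (zip_seq n x y)) \<partial>PiM I (\<lambda>_. distr D MX fst))"
    unfolding I_def by (rule Suc.IH[OF g_meas[unfolded I_def]])
  also have "\<dots> = (\<integral>\<^sup>+x. \<integral>\<^sup>+x'. (\<Sum>y\<in>labelings (Suc n).
                    labeling_prob \<eta> (Suc n) (x(n := x')) y * f (zip_seq (Suc n) (x(n := x')) y))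
                  \<partial>distr D MX fst \<partial>PiM I (\<lambda>_. distr D MX fst))"
  proof (intro nn_integral_cong)
    fix x assume x: "x \<in> space (PiM I (\<lambda>_. distr D MX fst))"
    then have \<omega>: "zip_seq n x y \<in> space (PiM I (\<lambda>_. D))" for y
      using zip_seq_in_space unfolding I_def by simp
    define G where "G y x' = label_prob \<eta> x' True * f ((zip_seq n x y)(n := (x', True)))
                             + label_prob \<eta> x' False * f ((zip_seq n x y)(n := (x', False)))" for y x'
    have "G y \<in> borel_measurable (distr D MX fst)" for y
      unfolding G_def using measurable_component_update[OF \<omega> I(2)]
      by (intro borel_measurable_add borel_measurable_times_ennreal label_prob_measurable_PX
          measurable_compose[OF measurable_label_pair] measurable_compose[OF _ f])
    moreover have "g (zip_seq n x y) = (\<integral>\<^sup>+x'. G y x' \<partial>distr D MX fst)" for y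
      unfolding g_def G_def by (rule nn_integral_D_update[OF f I(2) \<omega>])
    ultimately have "(\<Sum>y\<in>labelings n. labeling_prob \<eta> n x y * g (zip_seq n x y)) =
        (\<integral>\<^sup>+x'. (\<Sum>y\<in>labelings n. labeling_prob \<eta> n x y * G y x') \<partial>distr D MX fst)"
      by (simp add: nn_integral_cmult nn_integral_sum finite_labelings)
    also have "\<dots> = (\<integral>\<^sup>+x'. (\<Sum>y\<in>labelings (Suc n).
                    labeling_prob \<eta> (Suc n) (x(n := x')) y * f (zip_seq (Suc n) (x(n := x')) y)) \<partial>distr D MX fst)"
      by (intro nn_integral_cong)
         (simp add: G_def sum_labelings_Suc labeling_prob_update zip_seq_update distrib_left mult.assoc)
    finally show "(\<Sum>y\<in>labelings n. labeling_prob \<eta> n x y * g (zip_seq n x y)) = \<dots>" .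
  qed
  also have "\<dots> = (\<integral>\<^sup>+x. (\<Sum>y\<in>labelings (Suc n). labeling_prob \<eta> (Suc n) x y * f (zip_seq (Suc n) x y))
                   \<partial>PiM (insert n I) (\<lambda>_. distr D MX fst))"
  proof (rule PP.product_nn_integral_insert[OF I(3) I(2), symmetric])
    show "(\<lambda>x. \<Sum>y\<in>labelings (Suc n). labeling_prob \<eta> (Suc n) x y * f (zip_seq (Suc n) x y))
          \<in> borel_measurable (PiM (insert n I) (\<lambda>_. distr D MX fst))"
      using I measurable_compose[OF zip_seq_measurable Suc.prems]
      by (intro borel_measurable_sum borel_measurable_times_ennreal labeling_prob_measurable) auto
  qed
  finally show ?case using I by simp
qed

lemma integral_PiM_D_le:
  fixes f :: "(nat \<Rightarrow> 'x \<times> bool) \<Rightarrow> real"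
  assumes f: "f \<in> borel_measurable (PiM {..<n} (\<lambda>_. D))" and bounded: "\<And>\<omega>. \<bar>f \<omega>\<bar> \<le> B"
    and cond: "\<And>x. \<forall>t<n. x t \<in> space MX \<Longrightarrow>
       measure_pmf.expectation (Pi_pmf {..<n} False (\<lambda>t. bernoulli_pmf (\<eta> (x t)))) (\<lambda>y. f (zip_seq n x y)) \<le> c"
  shows "(\<integral>\<omega>. f \<omega> \<partial>PiM {..<n} (\<lambda>_. D)) \<le> c"
proof -
  interpret P: prob_space "PiM {..<n} (\<lambda>_. D)"
    by (intro prob_space_PiM D_prob)
  interpret PX: prob_space "PiM {..<n} (\<lambda>_. distr D MX fst)"
    by (intro prob_space_PiM prob_space_PX)
  define Ex where "Ex x = measure_pmf.expectation (Pi_pmf {..<n} False (\<lambda>t. bernoulli_pmf (\<eta> (x t))))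
                            (\<lambda>y. f (zip_seq n x y) + B)" for x
  have nonneg: "0 \<le> f \<omega> + B" for \<omega>
    using abs_le_D2[OF bounded[of \<omega>]] by linarith
  have Ex: "(\<Sum>y\<in>labelings n. labeling_prob \<eta> n x y * ennreal (f (zip_seq n x y) + B)) = ennreal (Ex x)"
    and Ex_nonneg: "0 \<le> Ex x" and Ex_le: "Ex x \<le> c + B"
    if "x \<in> space (PiM {..<n} (\<lambda>_. distr D MX fst))" for x
  proof -
    have x: "\<forall>t<n. x t \<in> space MX"
      using that by (auto simp: space_PiM PiE_iff)
    then show "(\<Sum>y\<in>labelings n. labeling_prob \<eta> n x y * ennreal (f (zip_seq n x y) + B)) = ennreal (Ex x)"
      unfolding Ex_def using eta_range nonneg by (intro sum_labelings_eq_expectation) auto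
    show "0 \<le> Ex x"
      unfolding Ex_def using nonneg by simp
    have "integrable (Pi_pmf {..<n} False (\<lambda>t. bernoulli_pmf (\<eta> (x t)))) (\<lambda>y. f (zip_seq n x y))"
      using bounded by (intro measure_pmf.integrable_const_bound[where B=B]) auto
    then show "Ex x \<le> c + B"
      unfolding Ex_def using cond[OF x] by (simp add: measure_pmf.prob_space)
  qed
  obtain x0 where "x0 \<in> space (PiM {..<n} (\<lambda>_. distr D MX fst))"
    using PX.not_empty by blast
  then have "0 \<le> c + B"
    using Ex_nonneg Ex_le by fastforce
  have "integrable (PiM {..<n} (\<lambda>_. D)) f"
    using f bounded by (intro P.integrable_const_bound[where B=B]) auto
  then have "ennreal ((\<integral>\<omega>. f \<omega> \<partial>PiM {..<n} (\<lambda>_. D)) + B) = (\<integral>\<^sup>+\<omega>. ennreal (f \<omega> + B) \<partial>PiM {..<n} (\<lambda>_. D))"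
    using nonneg by (simp add: nn_integral_eq_integral P.prob_space)
  also have "\<dots> = (\<integral>\<^sup>+x. (\<Sum>y\<in>labelings n. labeling_prob \<eta> n x y * ennreal (f (zip_seq n x y) + B))
                    \<partial>PiM {..<n} (\<lambda>_. distr D MX fst))"
    using f by (intro nn_integral_PiM_D_labelings measurable_compose[OF _ measurable_ennreal]
      borel_measurable_add borel_measurable_const)
  also have "\<dots> \<le> (\<integral>\<^sup>+x. ennreal (c + B) \<partial>PiM {..<n} (\<lambda>_. distr D MX fst))"
    using Ex Ex_le by (intro nn_integral_mono) (simp add: ennreal_leI)
  also have "\<dots> = ennreal (c + B)"
    by (simp add: PX.emeasure_space_1)
  finally show ?thesis
    using \<open>0 \<le> c + B\<close> by (simp add: ennreal_le_iff)
qed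

end

theorem theorem1:
  fixes MX :: "'x measure" and D :: "('x \<times> bool) measure"
    and \<eta> :: "'x \<Rightarrow> real" and H :: "('x \<Rightarrow> bool) set"
    and d m T :: nat
    and sel :: "('x \<Rightarrow> bool) set \<Rightarrow> 'x \<Rightarrow> bool"
    and amin :: "('x \<Rightarrow> bool) set \<Rightarrow> ('x \<times> bool) list \<Rightarrow> ('x \<Rightarrow> bool)"
  assumes D_prob: "prob_space D"
    and D_sets: "sets D = sets (MX \<Otimes>\<^sub>M count_space UNIV)"
    and eta_meas: "\<eta> \<in> borel_measurable MX"
    and eta_range: "\<forall>x\<in>space MX. 0 \<le> \<eta> x \<and> \<eta> x \<le> 1"
    and eta_cond: "\<forall>A\<in>sets MX. measure D (A \<times> {True}) = (LINT x:A|distr D MX fst. \<eta> x)"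
    and H_meas: "H \<subseteq> MX \<rightarrow>\<^sub>M count_space UNIV"
    and H_vc: "vc_dim (space MX) H d"
    and bayes_in_H: "(\<lambda>x. 1/2 \<le> \<eta> x) \<in> H"
    and m_pos: "m > 0"
    and sel_ok: "\<forall>A x. A \<noteq> {} \<longrightarrow> (\<exists>h\<in>A. sel A x = h x)"
    and amin_ok: "\<forall>A Z. A \<noteq> {} \<longrightarrow>
                    amin A Z \<in> A \<and> (\<forall>h\<in>A. emp_err Z (amin A Z) \<le> emp_err Z h)"
    and regret_meas: "ola_regret H (ola_M m d T) (beta (space MX) H T (ola_M m d T)) amin sel
                        (\<lambda>x. 1/2 \<le> \<eta> x) T
                      \<in> borel_measurable (PiM {..<T} (\<lambda>_. D))"
  shows "integrable (PiM {..<T} (\<lambda>_. D))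
           (ola_regret H (ola_M m d T) (beta (space MX) H T (ola_M m d T)) amin sel
              (\<lambda>x. 1/2 \<le> \<eta> x) T)
       \<and> (\<integral>\<omega>. ola_regret H (ola_M m d T) (beta (space MX) H T (ola_M m d T)) amin sel
              (\<lambda>x. 1/2 \<le> \<eta> x) T \<omega> \<partial>(PiM {..<T} (\<lambda>_. D))) \<le> 1/2"
proof
  define R where "R = ola_regret H (ola_M m d T) (beta (space MX) H T (ola_M m d T)) amin sel
                        (\<lambda>x. 1/2 \<le> \<eta> x) T"
  interpret prob_space "PiM {..<T} (\<lambda>_. D)"
    by (intro prob_space_PiM D_prob)
  show "integrable (PiM {..<T} (\<lambda>_. D)) R"
    using regret_meas by (intro integrable_const_bound[where B="real T"]) (simp_all add: R_def abs_ola_regret_le)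
  have "measure_pmf.expectation (Pi_pmf {..<T} False (\<lambda>t. bernoulli_pmf (\<eta> (x t))))
          (\<lambda>y. R (zip_seq T x y)) \<le> 1/2" if "\<forall>t<T. x t \<in> space MX" for x
  proof -
    have "R (zip_seq T x y) = R (\<lambda>i. (x i, y i))" for y
      unfolding R_def by (rule ola_regret_cong) (simp add: zip_seq_def)
    moreover have "measure_pmf.expectation (Pi_pmf {..<T} False (\<lambda>t. bernoulli_pmf (\<eta> (x t))))
          (\<lambda>y. R (\<lambda>i. (x i, y i))) \<le> 1/2"
      unfolding R_def using amin_ok that eta_range
      by (intro expected_ola_regret_le_half[OF sel_ok _ bayes_in_H]) auto
    ultimately show ?thesis by (simp only:)
  qed
  then show "(\<integral>\<omega>. R \<omega> \<partial>PiM {..<T} (\<lambda>_. D)) \<le> 1/2"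
    using regret_meas abs_ola_regret_le
    by (intro integral_PiM_D_le[OF D_prob D_sets eta_meas eta_range eta_cond]) (simp_all add: R_def)
qed

end
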